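(* Let $a,b,k$ be positive integers. There exists an integer $N=N(a,b,k)$ such that for every $n\ge N$, BoxWaiter has a winning strategy in the game $WCBox(n\times k,(a:b))$.
   Context: $WCBox(n\times k,(a:b))$ is the $(a:b)$ Waiter-Client game whose board is the disjoint union of $n$ sets ("boxes") of size $k$ each and whose target sets are the boxes: in each round BoxWaiter selects $a+b$ unclaimed elements, BoxClient claims $a$ of them and BoxWaiter the rest (in the last round, if $t$ elements remain, BoxWaiter takes all if $t\le b$, otherwise BoxClient takes $t-b$ and BoxWaiter the rest). BoxWaiter wins if by the end BoxClient has claimed all elements of some box; otherwise BoxClient wins. *)

theory Defs
  imports Main
begin

definition box_board :: "nat \<Rightarrow> nat \<Rightarrow> (nat \<times> nat) set" where
  "box_board n k = {0..<n} \<times> {0..<k}"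

definition box :: "nat \<Rightarrow> nat \<Rightarrow> (nat \<times> nat) set" where
  "box k i = {i} \<times> {0..<k}"

text \<open>waiter_wins a b n k U C: in the (a:b) Waiter-Client game WCBox(n x k),
  from the position where U is the set of unclaimed elements and C is the set
  of elements claimed so far by BoxClient, BoxWaiter (moving next) has a
  winning strategy.  Defined as the least fixed point (the game is finite).\<close>

inductive waiter_wins :: "nat \<Rightarrow> nat \<Rightarrow> nat \<Rightarrow> nat \<Rightarrow> (nat \<times> nat) set \<Rightarrow> (nat \<times> nat) set \<Rightarrow> bool"
  for a b n k where
  finished:
    "\<lbrakk> U = {}; \<exists>i<n. box k i \<subseteq> C \<rbrakk> \<Longrightarrow> waiter_wins a b n k U C"
| round:
    "\<lbrakk> a + b \<le> card U; S \<subseteq> U; card S = a + b;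
       \<forall>A. A \<subseteq> S \<and> card A = a \<longrightarrow> waiter_wins a b n k (U - S) (C \<union> A) \<rbrakk>
     \<Longrightarrow> waiter_wins a b n k U C"
| last_waiter_all:
    "\<lbrakk> 0 < card U; card U < a + b; card U \<le> b; waiter_wins a b n k {} C \<rbrakk>
     \<Longrightarrow> waiter_wins a b n k U C"
| last_split:
    "\<lbrakk> 0 < card U; card U < a + b; b < card U;
       \<forall>A. A \<subseteq> U \<and> card A = card U - b \<longrightarrow> waiter_wins a b n k {} (C \<union> A) \<rbrakk>
     \<Longrightarrow> waiter_wins a b n k U C"

definition box_waiter_wins :: "nat \<Rightarrow> nat \<Rightarrow> nat \<Rightarrow> nat \<Rightarrow> bool" where
  "box_waiter_wins a b n k = waiter_wins a b n k (box_board n k) {}"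

end

theory Submission
  imports Defs
begin

text \<open>Call a box open at level r if BoxWaiter owns none of its elements and at most r of them
  are unclaimed. With (a+b)^r open boxes of level r BoxWaiter wins, by induction on r: while
  fewer than (a+b)^r boxes have level r, BoxWaiter picks a+b boxes of level r+1 and offers one
  unclaimed element of each; the a boxes from which BoxClient takes an element drop to level r.
  Thus (a+b)^(r+1) boxes of level r+1 produce (a+b)^r boxes of level r, and a box of level 0
  belongs to BoxClient. Initially all n boxes are open at level k, so N = (a+b)^k works.\<close>

lemma box_disjoint: "i \<noteq> j \<Longrightarrow> box k i \<inter> box k j = {}"
  by (auto simp: box_def)

lemma finite_box [simp]: "finite (box k i)"
  by (simp add: box_def)

lemma waiter_wins_if_box_claimed:
  assumes "0 < a + b" "finite U" "i < n" "box k i \<subseteq> C"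
  shows "waiter_wins a b n k U C"
  using assms(2-4)
proof (induction "card U" arbitrary: U C rule: less_induct)
  case less
  have ended: "waiter_wins a b n k {} C'" if "C \<subseteq> C'" for C'
    using finished less.prems that by blast
  consider "a + b \<le> card U" | "U = {}" | "0 < card U" "card U < a + b"
    using less.prems(1) by fastforce
  then show ?case
  proof cases
    case 1
    then obtain S where S: "S \<subseteq> U" "card S = a + b"
      using obtain_subset_with_card_n by metis
    have "card (U - S) = card U - (a + b)"
      using S less.prems(1) by (simp add: card_Diff_subset finite_subset)
    then have "card (U - S) < card U"
      using assms(1) 1 by linarith
    then have "waiter_wins a b n k (U - S) (C \<union> A)" for A
      using less.hyps[of "U - S" "C \<union> A"] less.prems by auto
    then show ?thesis
      using round[OF 1 S] by blast
  next
    case 2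
    then show ?thesis using ended by simp
  next
    case 3
    show ?thesis
    proof (cases "card U \<le> b")
      case True
      then show ?thesis using last_waiter_all 3 ended by blast
    next
      case False
      then show ?thesis using last_split[OF 3 _] ended by auto
    qed
  qed
qed

text \<open>Elements outside U \<union> C belong to BoxWaiter.\<close>

definition open_box :: "nat \<Rightarrow> nat \<Rightarrow> nat \<Rightarrow> (nat \<times> nat) set \<Rightarrow> (nat \<times> nat) set \<Rightarrow> nat \<Rightarrow> bool" where
  "open_box n k r U C i \<longleftrightarrow> i < n \<and> box k i \<subseteq> U \<union> C \<and> card (box k i \<inter> U) \<le> r"

lemma open_box_initial:
  assumes "i < n"
  shows "open_box n k k (box_board n k) {} i"
proof -
  have "box k i \<subseteq> box_board n k"
    using assms by (auto simp: box_def box_board_def)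
  moreover have "card (box k i) = k"
    by (simp add: box_def card_cartesian_product)
  ultimately show ?thesis
    using assms by (simp add: open_box_def Int_absorb2)
qed

lemma waiter_wins_if_open_box_exhausted:
  assumes "0 < a + b" "finite U" "open_box n k r U C i" "box k i \<inter> U = {}"
  shows "waiter_wins a b n k U C"
  using assms by (intro waiter_wins_if_box_claimed[of a b U i n k C]) (auto simp: open_box_def)

lemma open_box_remove:
  assumes "open_box n k r U C i" "box k i \<inter> S \<subseteq> C'" "C \<subseteq> C'"
  shows "open_box n k r (U - S) C' i"
proof -
  have "card (box k i \<inter> (U - S)) \<le> card (box k i \<inter> U)"
    by (intro card_mono) auto
  then show ?thesis
    using assms by (auto simp: open_box_def)
qed

lemma open_box_remove_unclaimed:
  assumes "open_box n k (Suc r) U C i" "y \<in> box k i \<inter> U \<inter> S" "box k i \<inter> S \<subseteq> C'" "C \<subseteq> C'"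
  shows "open_box n k r (U - S) C' i"
proof -
  have "card (box k i \<inter> (U - S)) \<le> card (box k i \<inter> U - {y})"
    using assms(2) by (intro card_mono) auto
  also have "\<dots> = card (box k i \<inter> U) - 1"
    using assms(2) by simp
  finally show ?thesis
    using assms by (auto simp: open_box_def)
qed

lemma box_inter_representatives:
  assumes "\<forall>i\<in>D. x i \<in> box k i"
  shows "box k j \<inter> x ` D = x ` (D \<inter> {j})"
proof -
  have "i = j" if "i \<in> D" "x i \<in> box k j" for i
    using assms that box_disjoint[of i j k] by blast
  then show ?thesis
    using assms by blast
qed

lemma waiter_wins_offering_representatives:
  assumes "finite U" "inj_on x D" "x ` D \<subseteq> U" "card D = a + b"
    and "\<And>B. B \<subseteq> D \<Longrightarrow> card B = a \<Longrightarrow> waiter_wins a b n k (U - x ` D) (C \<union> x ` B)"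
  shows "waiter_wins a b n k U C"
proof -
  have card_S: "card (x ` D) = a + b"
    using assms(2,4) by (simp add: card_image)
  have "waiter_wins a b n k (U - x ` D) (C \<union> A)" if "A \<subseteq> x ` D" "card A = a" for A
  proof -
    define B where "B = D \<inter> x -` A"
    have "x ` B = A"
      using that(1) by (auto simp: B_def)
    moreover have "card B = a"
      using that(2) \<open>x ` B = A\<close> card_image[OF inj_on_subset[OF assms(2), of B]]
      by (simp add: B_def)
    ultimately show ?thesis
      using assms(5)[of B] by (auto simp: B_def)
  qed
  moreover have "a + b \<le> card U"
    using card_S card_mono[OF assms(1,3)] by simp
  ultimately show ?thesis
    using round[OF _ assms(3) card_S] by blast
qed

text \<open>J holds boxes already of level r, K boxes of level r+1; t more rounds
  promote enough of K to complete (a+b)^r boxes of level r.\<close>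

lemma waiter_wins_promoting_boxes:
  assumes a: "0 < a"
    and level_r: "\<And>U C I. finite U \<Longrightarrow> I \<subseteq> {i. open_box n k r U C i} \<Longrightarrow> card I = (a + b) ^ r
                       \<Longrightarrow> waiter_wins a b n k U C"
  shows "finite U \<Longrightarrow> J \<subseteq> {i. open_box n k r U C i} \<Longrightarrow> K \<subseteq> {i. open_box n k (Suc r) U C i}
    \<Longrightarrow> J \<inter> K = {} \<Longrightarrow> finite J \<Longrightarrow> finite K \<Longrightarrow> (a + b) ^ r \<le> card J + t \<Longrightarrow> (a + b) * t \<le> card K
    \<Longrightarrow> waiter_wins a b n k U C"
proof (induction t arbitrary: U C J K)
  case 0
  then have "(a + b) ^ r \<le> card J"
    by simp
  then obtain I where "I \<subseteq> J" "card I = (a + b) ^ r"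
    by (meson obtain_subset_with_card_n)
  then show ?case
    using level_r[of U I C] 0 by blast
next
  case (Suc t)
  then have "a + b \<le> card K"
    by simp
  then obtain D where D: "D \<subseteq> K" "card D = a + b"
    using obtain_subset_with_card_n by metis
  have finite_D: "finite D"
    using D(1) Suc.prems(6) finite_subset by blast
  have open_D: "open_box n k (Suc r) U C i" if "i \<in> D" for i
    using that D(1) Suc.prems(3) by blast
  show ?case
  proof (cases "\<exists>i\<in>D. box k i \<inter> U = {}")
    case True
    then obtain i where i: "i \<in> D" "box k i \<inter> U = {}"
      by blast
    have "0 < a + b"
      using a by simp
    then show ?thesis
      by (rule waiter_wins_if_open_box_exhausted[OF _ Suc.prems(1) open_D[OF i(1)] i(2)])
  next
    case False
    then have "\<forall>i\<in>D. \<exists>y. y \<in> box k i \<inter> U"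
      by blast
    then obtain x where x: "\<forall>i\<in>D. x i \<in> box k i \<inter> U"
      by (rule bchoice[THEN exE]) blast
    have x_box: "\<forall>i\<in>D. x i \<in> box k i"
      using x by blast
    have "inj_on x D"
    proof (rule inj_onI)
      fix i j
      assume "i \<in> D" "j \<in> D" "x i = x j"
      then have "x i \<in> box k i \<inter> box k j"
        using x_box by (metis IntI)
      then show "i = j"
        using box_disjoint by blast
    qed
    moreover have "x ` D \<subseteq> U"
      using x by blast
    moreover have "waiter_wins a b n k (U - x ` D) (C \<union> x ` B)"
      if B: "B \<subseteq> D" "card B = a" for B
    proof (rule Suc.IH)
      have kept: "open_box n k s (U - x ` D) (C \<union> x ` B) j"
        if "open_box n k s U C j" "j \<notin> D" for s j
      proof (rule open_box_remove[OF that(1)])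
        show "box k j \<inter> x ` D \<subseteq> C \<union> x ` B"
          using box_inter_representatives[OF x_box, of j] that(2) by simp
      qed simp
      have promoted: "open_box n k r (U - x ` D) (C \<union> x ` B) i" if "i \<in> B" for i
      proof (rule open_box_remove_unclaimed[OF open_D])
        show "i \<in> D"
          using that B(1) by blast
        then show "x i \<in> box k i \<inter> U \<inter> x ` D"
          using x by blast
        show "box k i \<inter> x ` D \<subseteq> C \<union> x ` B"
          using box_inter_representatives[OF x_box, of i] that by auto
      qed simp
      show "finite (U - x ` D)"
        using Suc.prems(1) by simp
      show "J \<union> B \<subseteq> {i. open_box n k r (U - x ` D) (C \<union> x ` B) i}"
        using kept promoted D(1) Suc.prems(2,4) by blast
      show "K - D \<subseteq> {i. open_box n k (Suc r) (U - x ` D) (C \<union> x ` B) i}"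
        using kept Suc.prems(3) by blast
      show "(J \<union> B) \<inter> (K - D) = {}"
        using Suc.prems(4) B(1) D(1) by blast
      show "finite (J \<union> B)"
        using Suc.prems(5) B(1) finite_D finite_subset by blast
      show "finite (K - D)"
        using Suc.prems(6) by simp
      have "card (J \<union> B) = card J + a"
        using Suc.prems(4,5) B D(1) finite_D finite_subset by (subst card_Un_disjoint) blast+
      then show "(a + b) ^ r \<le> card (J \<union> B) + t"
        using Suc.prems(7) a by simp
      show "(a + b) * t \<le> card (K - D)"
        using Suc.prems(8) D finite_D by (simp add: card_Diff_subset)
    qed
    ultimately show ?thesis
      using waiter_wins_offering_representatives[OF Suc.prems(1) _ _ D(2)] by blast
  qed
qed

lemma waiter_wins_many_open_boxes:
  assumes "0 < a"
  shows "finite U \<Longrightarrow> I \<subseteq> {i. open_box n k r U C i} \<Longrightarrow> card I = (a + b) ^ r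
    \<Longrightarrow> waiter_wins a b n k U C"
proof (induction r arbitrary: U C I)
  case 0
  then obtain i where "open_box n k 0 U C i"
    by (metis card_1_singletonE insert_subset mem_Collect_eq power_0)
  then show ?case
    using waiter_wins_if_open_box_exhausted[of a b U n k 0 C i] assms 0
    by (simp add: open_box_def card_eq_0_iff)
next
  case (Suc r)
  have "finite I"
    using Suc.prems(3) assms card_gt_0_iff by fastforce
  then show ?case
    using waiter_wins_promoting_boxes[OF assms Suc.IH, where J = "{}" and K = I and t = "(a + b) ^ r"]
      Suc.prems by simp
qed

theorem mainTheorem17:
  fixes a b k :: nat
  assumes "0 < a" and "0 < b" and "0 < k"
  shows "\<exists>N. \<forall>n\<ge>N. box_waiter_wins a b n k"
proof (intro exI allI impI) \<comment> \<open>only \<open>0 < a\<close> is needed\<close>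
  fix n
  assume "(a + b) ^ k \<le> n"
  then have "{0..<(a + b) ^ k} \<subseteq> {i. open_box n k k (box_board n k) {} i}"
    using open_box_initial by auto
  moreover have "finite (box_board n k)"
    by (simp add: box_board_def)
  ultimately show "box_waiter_wins a b n k"
    unfolding box_waiter_wins_def
    using waiter_wins_many_open_boxes[OF assms(1)] by simp
qed

end
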